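(* Let $A$ and $B$ be persistence diagrams and let $c^*\ge 0$ be an optimal dilation for $(A,B)$. Then: (1) (Positivity) $\overline{d_D}(A,B)\ge 0$, and $\overline{d_D}(A,B)=0$ if and only if $B=c^*A$. (2) (Asymmetry) $\overline{d_D}(A,B)\ge c^*\cdot \overline{d_D}(B,A)$. (3) (Dilation invariance) For every $c>0$: $\overline{d_D}(cA,B)=\overline{d_D}(A,B)$ and $\overline{d_D}(A,cB)=c\cdot\overline{d_D}(A,B)$. (4) (Boundedness) $\overline{d_D}(A,B)\le \min\{d_\infty(A,B),\, d_\infty(D_0,B)\}$, where $D_0$ is the empty diagram.
   Context: A persistence diagram is a finite multiset of points $a=(a_x,a_y)\in\mathbb{R}^2$ with $0\le a_x<a_y<\infty$, together with the diagonal $\Delta=\{(x,x)\}$ taken with infinite multiplicity. The empty diagram $D_0$ consists only of $\Delta$. The bottleneck distance is $d_\infty(A,B)=\inf_\gamma\sup_{a}\|a-\gamma(a)\|_\infty$, the infimum over multi-bijections $\gamma$ between $A\cup\Delta$ and $B\cup\Delta$ (points may be matched to the diagonal; matching a point $a$ to $\Delta$ costs $(a_y-a_x)/2$). For $c>0$, the dilation is $cA=\{(ca_x,ca_y): a\in A\}$ (diagonal fixed), and by convention $0A=D_0$. The dilation-invariant bottleneck dissimilarity is $\overline{d_D}(A,B)=\inf_{c> 0} d_\infty(cA,B)$ (equivalently the infimum over $c\ge 0$). An optimal dilation is a number $c^*\ge 0$ with $d_\infty(c^*A,B)=\overline{d_D}(A,B)$; such a $c^*$ exists. *)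

theory Defs
  imports Complex_Main "HOL-Library.Multiset"
begin

text \<open>A persistence diagram is represented by its finite multiset of off-diagonal
points (birth, death) with 0 <= birth < death; the diagonal (with infinite
multiplicity) is implicit.\<close>

type_synonym pt = "real \<times> real"
type_synonym diagram = "pt multiset"

definition is_diagram :: "diagram \<Rightarrow> bool" where
  "is_diagram A \<longleftrightarrow> (\<forall>a \<in># A. 0 \<le> fst a \<and> fst a < snd a)"

definition D0 :: diagram where "D0 = {#}"

definition linf :: "pt \<Rightarrow> pt \<Rightarrow> real" where
  "linf a b = max \<bar>fst a - fst b\<bar> \<bar>snd a - snd b\<bar>"

text \<open>cost of matching a point to the diagonal\<close>
definition pers_half :: "pt \<Rightarrow> real" where
  "pers_half a = (snd a - fst a) / 2"

text \<open>A multi-bijection between A \<union> \<Delta> and B \<union> \<Delta> is given by the multiset M of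
pairs of off-diagonal points matched to each other; all remaining points of A and
of B are matched to the diagonal (and the diagonal to itself).\<close>
definition is_matching :: "diagram \<Rightarrow> diagram \<Rightarrow> (pt \<times> pt) multiset \<Rightarrow> bool" where
  "is_matching A B M \<longleftrightarrow> image_mset fst M \<subseteq># A \<and> image_mset snd M \<subseteq># B"

definition matching_cost :: "diagram \<Rightarrow> diagram \<Rightarrow> (pt \<times> pt) multiset \<Rightarrow> real" where
  "matching_cost A B M = Max ({0}
      \<union> (\<lambda>p. linf (fst p) (snd p)) ` set_mset M
      \<union> pers_half ` set_mset (A - image_mset fst M)
      \<union> pers_half ` set_mset (B - image_mset snd M))"

definition bottleneck :: "diagram \<Rightarrow> diagram \<Rightarrow> real" where
  "bottleneck A B = Inf (matching_cost A B ` {M. is_matching A B M})"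

text \<open>Dilation cA; by convention 0A (and, harmlessly, cA for c < 0) is D_0.\<close>
definition dil :: "real \<Rightarrow> diagram \<Rightarrow> diagram" where
  "dil c A = (if c > 0 then image_mset (\<lambda>a. (c * fst a, c * snd a)) A else D0)"

definition dbar :: "diagram \<Rightarrow> diagram \<Rightarrow> real" where
  "dbar A B = Inf ((\<lambda>c. bottleneck (dil c A) B) ` {c. c > 0})"

definition optimal_dilation :: "diagram \<Rightarrow> diagram \<Rightarrow> real \<Rightarrow> bool" where
  "optimal_dilation A B c \<longleftrightarrow> c \<ge> 0 \<and> bottleneck (dil c A) B = dbar A B"

end

theory Submission
  imports Defs
begin

text \<open>Rescaling a matching of A with B by c > 0 gives a matching of cA with cB of c times
the cost, so the bottleneck distance is homogeneous: d(cA, cB) = c d(A, B). Since c \<mapsto> cd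
permutes the positive reals, the infimum defining the dissimilarity is unchanged by dilating A
and is multiplied by c when B is dilated; asymmetry follows by writing B = c*(B/c*). Bottleneck
distance 0 forces equality because optimal matchings exist (there are finitely many) and
off-diagonal points have positive persistence. For the bounds take c = 1, respectively let
c \<rightarrow> 0, which pushes cA onto the diagonal.\<close>

lemma finite_matchings: "finite {M. is_matching A B M}"
proof (rule finite_subset)
  show "{M. is_matching A B M} \<subseteq>
      (\<Union>n\<le>size A. multisets_of_size (set_mset A \<times> set_mset B) n)"
  proof
    fix M assume "M \<in> {M. is_matching A B M}"
    then have A: "image_mset fst M \<subseteq># A" and B: "image_mset snd M \<subseteq># B"
      by (auto simp: is_matching_def)
    have "size M \<le> size A" using size_mset_mono[OF A] by simp
    moreover have "set_mset M \<subseteq> set_mset A \<times> set_mset B"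
      using set_mset_mono[OF A] set_mset_mono[OF B] by force
    ultimately show "M \<in> (\<Union>n\<le>size A. multisets_of_size (set_mset A \<times> set_mset B) n)"
      by (auto simp: multisets_of_size_def)
  qed
qed auto

lemma is_matching_empty: "is_matching A B {#}"
  by (simp add: is_matching_def)

lemma matching_cost_le_iff:
  "matching_cost A B M \<le> r \<longleftrightarrow> 0 \<le> r
     \<and> (\<forall>p\<in>#M. linf (fst p) (snd p) \<le> r)
     \<and> (\<forall>a\<in># A - image_mset fst M. pers_half a \<le> r)
     \<and> (\<forall>b\<in># B - image_mset snd M. pers_half b \<le> r)"
  unfolding matching_cost_def by (subst Max_le_iff) auto

lemma matching_cost_nonneg: "0 \<le> matching_cost A B M"
  unfolding matching_cost_def by (rule Max_ge) auto

lemma bottleneck_le_matching_cost: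
  "is_matching A B M \<Longrightarrow> bottleneck A B \<le> matching_cost A B M"
  unfolding bottleneck_def
  by (rule cInf_lower) (auto intro: bdd_belowI[where m=0] matching_cost_nonneg)

lemma bottleneck_attained:
  obtains M where "is_matching A B M" and "bottleneck A B = matching_cost A B M"
proof -
  let ?S = "matching_cost A B ` {M. is_matching A B M}"
  have "finite ?S" and "?S \<noteq> {}"
    using finite_matchings[of A B] is_matching_empty[of A B] by auto
  then have "Inf ?S \<in> ?S" by (simp add: cInf_eq_Min)
  then show ?thesis using that unfolding bottleneck_def by auto
qed

lemma bottleneck_nonneg: "0 \<le> bottleneck A B"
  using bottleneck_attained matching_cost_nonneg by metis

lemma bottleneck_commute: "bottleneck A B = bottleneck B A"
proof -
  have le: "bottleneck Y X \<le> bottleneck X Y" for X Y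
  proof -
    obtain M where M: "is_matching X Y M" and opt: "bottleneck X Y = matching_cost X Y M"
      using bottleneck_attained .
    have "is_matching Y X (image_mset prod.swap M)"
      using M by (simp add: is_matching_def multiset.map_comp comp_def)
    moreover have "matching_cost Y X (image_mset prod.swap M) = matching_cost X Y M"
      unfolding matching_cost_def
      by (simp add: multiset.map_comp comp_def image_image linf_def abs_minus_commute Un_ac)
    ultimately show ?thesis using opt bottleneck_le_matching_cost by metis
  qed
  show ?thesis using le[of A B] le[of B A] by simp
qed

lemma bottleneck_refl: "bottleneck A A = 0"
proof -
  have "is_matching A A (image_mset (\<lambda>a. (a, a)) A)"
    by (simp add: is_matching_def multiset.map_comp comp_def)
  moreover have "matching_cost A A (image_mset (\<lambda>a. (a, a)) A) \<le> 0"
    by (simp add: matching_cost_le_iff multiset.map_comp comp_def linf_def)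
  ultimately show ?thesis
    using bottleneck_le_matching_cost bottleneck_nonneg by (metis order.antisym order.trans)
qed

lemma pers_half_pos: "is_diagram A \<Longrightarrow> a \<in># A \<Longrightarrow> 0 < pers_half a"
  by (simp add: is_diagram_def pers_half_def)

lemma bottleneck_eq_0_imp_eq:
  assumes "is_diagram A" and "is_diagram B" and "bottleneck A B = 0"
  shows "A = B"
proof -
  obtain M where M: "is_matching A B M" and "matching_cost A B M \<le> 0"
    using bottleneck_attained assms(3) by (metis order.refl)
  then have diag: "\<forall>p\<in>#M. linf (fst p) (snd p) \<le> 0"
    and "\<forall>a\<in># A - image_mset fst M. pers_half a \<le> 0"
    and "\<forall>b\<in># B - image_mset snd M. pers_half b \<le> 0"
    by (simp_all add: matching_cost_le_iff)
  then have A_rest: "A - image_mset fst M = {#}" and B_rest: "B - image_mset snd M = {#}"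
    using pers_half_pos[OF assms(1)] pers_half_pos[OF assms(2)]
    by (force simp flip: set_mset_eq_empty_iff dest: in_diffD)+
  have "A = image_mset fst M" "B = image_mset snd M"
    using M A_rest B_rest unfolding is_matching_def
    by (metis subset_mset.diff_add add.left_neutral)+
  moreover have "image_mset fst M = image_mset snd M"
    using diag by (intro image_mset_cong) (auto simp: linf_def prod_eq_iff)
  ultimately show ?thesis by simp
qed

definition scale_pt :: "real \<Rightarrow> pt \<Rightarrow> pt" where
  "scale_pt c a = (c * fst a, c * snd a)"

lemma dil_eq_image_scale_pt: "0 < c \<Longrightarrow> dil c A = image_mset (scale_pt c) A"
  by (simp add: dil_def scale_pt_def[abs_def])

lemma linf_scale_pt: "0 < c \<Longrightarrow> linf (scale_pt c a) (scale_pt c b) = c * linf a b"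
  by (simp add: linf_def scale_pt_def abs_mult max_mult_distrib_left flip: right_diff_distrib)

lemma pers_half_scale_pt: "pers_half (scale_pt c a) = c * pers_half a"
  by (simp add: pers_half_def scale_pt_def algebra_simps)

lemma dil_dil: "0 < c \<Longrightarrow> 0 < d \<Longrightarrow> dil c (dil d A) = dil (c * d) A"
  by (simp add: dil_def multiset.map_comp comp_def mult.assoc)

lemma dil_1: "dil 1 A = A"
  by (simp add: dil_def)

lemma dil_D0: "dil c D0 = D0"
  by (simp add: dil_def D0_def)

lemma is_diagram_dil: "is_diagram A \<Longrightarrow> is_diagram (dil c A)"
  by (auto simp: is_diagram_def dil_def D0_def)

lemma matching_cost_dil_le:
  assumes c: "0 < c" and M: "is_matching A B M"
  obtains M' where "is_matching (dil c A) (dil c B) M'"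
    and "matching_cost (dil c A) (dil c B) M' \<le> c * matching_cost A B M"
proof
  let ?M' = "image_mset (map_prod (scale_pt c) (scale_pt c)) M"
  have fst: "image_mset fst ?M' = image_mset (scale_pt c) (image_mset fst M)"
    and snd: "image_mset snd ?M' = image_mset (scale_pt c) (image_mset snd M)"
    by (simp_all add: multiset.map_comp comp_def)
  from M have A: "image_mset fst M \<subseteq># A" and B: "image_mset snd M \<subseteq># B"
    by (simp_all add: is_matching_def)
  show "is_matching (dil c A) (dil c B) ?M'"
    using A B c by (simp add: is_matching_def fst snd dil_eq_image_scale_pt image_mset_subseteq_mono)
  have "dil c A - image_mset fst ?M' = image_mset (scale_pt c) (A - image_mset fst M)"
    and "dil c B - image_mset snd ?M' = image_mset (scale_pt c) (B - image_mset snd M)"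
    using A B c by (simp_all add: fst snd dil_eq_image_scale_pt image_mset_Diff)
  moreover have "0 \<le> matching_cost A B M" by (rule matching_cost_nonneg)
  moreover note matching_cost_le_iff[of A B M "matching_cost A B M", simplified]
  ultimately show "matching_cost (dil c A) (dil c B) ?M' \<le> c * matching_cost A B M"
    using c by (auto simp: matching_cost_le_iff linf_scale_pt pers_half_scale_pt)
qed

lemma bottleneck_dil_le: "0 < c \<Longrightarrow> bottleneck (dil c A) (dil c B) \<le> c * bottleneck A B"
  by (metis bottleneck_attained matching_cost_dil_le bottleneck_le_matching_cost order.trans)

lemma bottleneck_dil: "0 < c \<Longrightarrow> bottleneck (dil c A) (dil c B) = c * bottleneck A B"
proof (rule order.antisym)
  assume c: "0 < c"
  have "bottleneck A B = bottleneck (dil (1/c) (dil c A)) (dil (1/c) (dil c B))"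
    using c by (simp add: dil_dil dil_1)
  also have "\<dots> \<le> 1/c * bottleneck (dil c A) (dil c B)"
    using c by (intro bottleneck_dil_le) simp
  finally show "c * bottleneck A B \<le> bottleneck (dil c A) (dil c B)"
    using c by (simp add: field_simps)
qed (rule bottleneck_dil_le)

lemma pers_half_le_bottleneck_D0: "a \<in># A \<Longrightarrow> pers_half a \<le> bottleneck D0 A"
proof -
  assume a: "a \<in># A"
  obtain M where "is_matching D0 A M" and opt: "bottleneck D0 A = matching_cost D0 A M"
    using bottleneck_attained .
  then have "M = {#}" by (simp add: is_matching_def D0_def)
  then show ?thesis
    using a opt matching_cost_le_iff[of D0 A M "bottleneck D0 A"] by simp
qed

lemma bottleneck_le_max_bottleneck_D0:
  "bottleneck A B \<le> max (bottleneck D0 A) (bottleneck D0 B)"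
proof -
  have "matching_cost A B {#} \<le> max (bottleneck D0 A) (bottleneck D0 B)"
    using pers_half_le_bottleneck_D0
    by (auto simp: matching_cost_le_iff bottleneck_nonneg intro: max.coboundedI1 max.coboundedI2)
  then show ?thesis
    using bottleneck_le_matching_cost[OF is_matching_empty] by (rule order.trans[rotated])
qed

lemma Inf_mult_left:
  fixes S :: "real set"
  assumes "0 < c" and "S \<noteq> {}" and "bdd_below S"
  shows "Inf ((*) c ` S) = c * Inf S"
proof (rule continuous_at_Inf_mono[symmetric])
  show "mono ((*) c)" using assms(1) by (simp add: monoI)
  show "continuous (at_right (Inf S)) ((*) c)"
    by (intro continuous_mult continuous_ident continuous_const)
qed (use assms in auto)

lemma image_mult_pos_reparam:
  assumes "0 < (c::real)"
  shows "(\<lambda>d. f (d * c)) ` {d. 0 < d} = f ` {d. 0 < d}"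
proof (intro equalityI subsetI)
  fix x assume "x \<in> f ` {d. 0 < d}"
  then obtain e where "0 < e" and "x = f e" by blast
  then show "x \<in> (\<lambda>d. f (d * c)) ` {d. 0 < d}"
    using assms by (intro image_eqI[where x = "e / c"]) auto
qed (use assms in auto)

lemma dbar_nonneg: "0 \<le> dbar A B"
  unfolding dbar_def by (rule cInf_greatest) (auto intro: bottleneck_nonneg exI[of _ 1])

lemma dbar_le_bottleneck: "0 < c \<Longrightarrow> dbar A B \<le> bottleneck (dil c A) B"
  unfolding dbar_def by (rule cInf_lower) (auto intro: bdd_belowI[where m=0] bottleneck_nonneg)

lemma dbar_dil_left:
  assumes "0 < c"
  shows "dbar (dil c A) B = dbar A B"
proof -
  have "(\<lambda>d. bottleneck (dil d (dil c A)) B) ` {d. 0 < d}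
      = (\<lambda>d. bottleneck (dil (d * c) A) B) ` {d. 0 < d}"
    using assms by (simp add: dil_dil)
  also have "\<dots> = (\<lambda>d. bottleneck (dil d A) B) ` {d. 0 < d}"
    using assms by (rule image_mult_pos_reparam)
  finally show ?thesis
    unfolding dbar_def by simp
qed

lemma dbar_dil_right:
  assumes c: "0 < c"
  shows "dbar A (dil c B) = c * dbar A B"
proof -
  let ?f = "\<lambda>d. bottleneck (dil d A) B"
  have pointwise: "bottleneck (dil d A) (dil c B) = c * ?f (d * (1 / c))" if "0 < d" for d
    using c that bottleneck_dil[OF c, of "dil (d / c) A" B] by (simp add: dil_dil)
  have "(\<lambda>d. bottleneck (dil d A) (dil c B)) ` {d. 0 < d}
      = (*) c ` (\<lambda>d. ?f (d * (1 / c))) ` {d. 0 < d}"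
    unfolding image_image using pointwise by (intro image_cong) auto
  also have "\<dots> = (*) c ` ?f ` {d. 0 < d}"
    using c image_mult_pos_reparam[of "1 / c" ?f] by simp
  finally have "(\<lambda>d. bottleneck (dil d A) (dil c B)) ` {d. 0 < d} = (*) c ` ?f ` {d. 0 < d}" .
  moreover have "Inf ((*) c ` ?f ` {d. 0 < d}) = c * Inf (?f ` {d. 0 < d})"
    using c by (intro Inf_mult_left) (auto intro: bdd_belowI[where m=0] bottleneck_nonneg)
  ultimately show ?thesis
    unfolding dbar_def by simp
qed

lemma dbar_le_bottleneck_D0: "dbar A B \<le> bottleneck D0 B"
proof (rule field_le_epsilon)
  fix e :: real assume e: "0 < e"
  define c where "c = e / (bottleneck D0 A + 1)"
  have c: "0 < c" and "c * bottleneck D0 A \<le> e"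
    using e bottleneck_nonneg[of D0 A] by (simp_all add: c_def field_simps)
  have "dbar A B \<le> bottleneck (dil c A) B"
    using c by (rule dbar_le_bottleneck)
  also have "\<dots> \<le> max (bottleneck D0 (dil c A)) (bottleneck D0 B)"
    by (rule bottleneck_le_max_bottleneck_D0)
  also have "bottleneck D0 (dil c A) = c * bottleneck D0 A"
    using bottleneck_dil[OF c, of D0 A] by (simp add: dil_D0)
  finally show "dbar A B \<le> bottleneck D0 B + e"
    using e \<open>c * bottleneck D0 A \<le> e\<close> bottleneck_nonneg[of D0 B]
    by (simp add: max_def split: if_split_asm)
qed

theorem mainTheorem1:
  fixes A B :: diagram and cs :: real
  assumes "is_diagram A" and "is_diagram B"
    and "optimal_dilation A B cs"
  shows "(dbar A B \<ge> 0 \<and> (dbar A B = 0 \<longleftrightarrow> B = dil cs A))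
       \<and> dbar A B \<ge> cs * dbar B A
       \<and> (\<forall>c>0. dbar (dil c A) B = dbar A B \<and> dbar A (dil c B) = c * dbar A B)
       \<and> dbar A B \<le> min (bottleneck A B) (bottleneck D0 B)"
proof -
  from assms(3) have cs: "0 \<le> cs" and opt: "bottleneck (dil cs A) B = dbar A B"
    by (simp_all add: optimal_dilation_def)
  have positivity: "dbar A B = 0 \<longleftrightarrow> B = dil cs A"
    using opt bottleneck_refl[of B] bottleneck_eq_0_imp_eq[OF is_diagram_dil[OF assms(1)] assms(2)]
    by metis
  have asymmetry: "cs * dbar B A \<le> dbar A B"
  proof (cases "cs = 0")
    case False
    with cs have "0 < cs" by simp
    then have "dbar A B = bottleneck (dil cs A) (dil cs (dil (1 / cs) B))"
      using opt by (simp add: dil_dil dil_1)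
    also have "\<dots> = cs * bottleneck (dil (1 / cs) B) A"
      using \<open>0 < cs\<close> by (simp add: bottleneck_dil bottleneck_commute[of A])
    finally show ?thesis
      using \<open>0 < cs\<close> dbar_le_bottleneck[of "1 / cs" B A] by simp
  qed (simp add: dbar_nonneg)
  have "dbar A B \<le> bottleneck A B"
    using dbar_le_bottleneck[of 1 A B] by (simp add: dil_1)
  then show ?thesis
    using positivity asymmetry dbar_nonneg[of A B] dbar_dil_left[of _ A B] dbar_dil_right[of _ A B]
      dbar_le_bottleneck_D0[of A B]
    by simp
qed

end
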